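(* Let $p$ be an odd prime and $n=p^{d_1}+\cdots+p^{d_k}$ with integers $0\le d_1<\cdots<d_k$ and $k>1$. Let \[ P:=\{\overline U: U\subsetneq\{p^{d_1},\ldots,p^{d_k}\}\}, \] where $\overline U$ is the sum of the elements of $U$ (so $\overline{\emptyset}=0\in P$), partially ordered by $\overline U\preccurlyeq\overline V$ iff $U\subseteq V$. For $T\subseteq P$ define \[ \chi^B(T):=\sum (-1)^h\,2^{\,k-|U_1|}, \] the sum ranging over all $h\ge0$ and all chains $U_1\subsetneq\cdots\subsetneq U_h\subsetneq U_{h+1}=\{p^{d_1},\ldots,p^{d_k}\}$ with $\overline{U_1},\ldots,\overline{U_h}\in T$ (for $h=0$ the term is $2^{k-k}=1$). Then \[ c^B_{p,i}(n)=\begin{cases} 2^{\,n-2^k+1}\,|\{T\subseteq P:\chi^B(T)\equiv i\pmod p\}| & \text{if } i=0,\\ 2^{\,n-2^k}\,|\{T\subseteq P:\chi^B(T)\equiv i\text{ or }\chi^B(T)\equiv -i\pmod p\}| & \text{otherwise.}\end{cases} \]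
   Context: A signed permutation of $[n]$ is a bijection $w$ of $\{\pm1,\ldots,\pm n\}$ with $w(-i)=-w(i)$; these form $\mathfrak{S}^B_n$. With $w(0):=0$, $D(w)=\{i\in\{0,\ldots,n-1\}: w(i)>w(i+1)\}$. A pseudo-composition of $n$ ($\alpha\models_0 n$) is a sequence $(\alpha_1,\ldots,\alpha_\ell)$ of integers with $\alpha_1\ge0$, $\alpha_2,\ldots,\alpha_\ell>0$ and sum $n$, with $D(\alpha)=\{\alpha_1,\alpha_1+\alpha_2,\ldots,\alpha_1+\cdots+\alpha_{\ell-1}\}$. The type $B$ ribbon number is $r^B_\alpha=|\{w\in\mathfrak{S}^B_n: D(w)=D(\alpha)\}|$ and $c^B_{p,i}(n)=|\{\alpha\models_0 n: r^B_\alpha\equiv i\pmod p\}|$. *)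

theory Defs
  imports "HOL-Number_Theory.Number_Theory"
begin

definition SB :: "nat \<Rightarrow> int set" where
  "SB n = {j::int. 1 \<le> \<bar>j\<bar> \<and> \<bar>j\<bar> \<le> int n}"

text \<open>Signed permutations of [n], represented as functions int => int that are
  bijections of SB n, odd on SB n, and the identity outside SB n (so w 0 = 0).\<close>
definition signed_perms :: "nat \<Rightarrow> (int \<Rightarrow> int) set" where
  "signed_perms n = {w. bij_betw w (SB n) (SB n) \<and> (\<forall>j\<in>SB n. w (-j) = - w j)
                        \<and> (\<forall>j. j \<notin> SB n \<longrightarrow> w j = j)}"

definition descents_B :: "nat \<Rightarrow> (int \<Rightarrow> int) \<Rightarrow> nat set" where
  "descents_B n w = {i. i < n \<and> w (int i) > w (int i + 1)}"

definition pseudo_comp :: "nat \<Rightarrow> nat list \<Rightarrow> bool" where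
  "pseudo_comp n \<alpha> \<longleftrightarrow> \<alpha> \<noteq> [] \<and> (\<forall>x\<in>set (tl \<alpha>). 0 < x) \<and> sum_list \<alpha> = n"

definition comp_descents :: "nat list \<Rightarrow> nat set" where
  "comp_descents \<alpha> = {sum_list (take j \<alpha>) | j. 1 \<le> j \<and> j < length \<alpha>}"

definition ribbonB :: "nat \<Rightarrow> nat list \<Rightarrow> nat" where
  "ribbonB n \<alpha> = card {w \<in> signed_perms n. descents_B n w = comp_descents \<alpha>}"

definition cB :: "nat \<Rightarrow> int \<Rightarrow> nat \<Rightarrow> nat" where
  "cB p i n = card {\<alpha>. pseudo_comp n \<alpha> \<and> [int (ribbonB n \<alpha>) = i] (mod int p)}"

definition chainsB :: "nat set \<Rightarrow> nat set \<Rightarrow> nat set list set" where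
  "chainsB E T = {Us. sorted_wrt (\<subset>) Us \<and> (\<forall>U\<in>set Us. U \<subset> E \<and> \<Sum>U \<in> T)}"

text \<open>chi^B(T); the term of a chain is (-1)^h 2^(k-|U_1|), where for h = 0 we
  take U_1 = U_{h+1} = E, giving 1.\<close>
definition chiB :: "nat set \<Rightarrow> nat set \<Rightarrow> int" where
  "chiB E T = (\<Sum>Us\<in>chainsB E T. (-1) ^ length Us * 2 ^ (card E - card (hd (Us @ [E]))))"

end

(* A signed permutation of [n] is encoded by its window, a signed word, and the words whose
   descent set lies in S = {t_1 > ... > t_h} are counted by a product of binomial coefficients
   and powers of 2. When n is a sum of distinct powers of p, Lucas' and Fermat's theorems turn
   this product, modulo p, into a weighted count of chains of subsets of E = {p^d_1, ..., p^d_k}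
   with sums t_h < ... < t_1, and Moebius inversion over S gives r^B = (-1)^|S| chi^B(S) (mod p)
   for the ribbon number of the pseudo-composition with descent set S. Since chi^B(S) depends
   only on the part of S inside P, every subset T of P is completed by the 2^(n + 1 - 2^k)
   subsets of the complement of P, half of which flip the sign (-1)^|S|. *)

theory Submission
  imports Defs
begin

section \<open>Binomial coefficients and powers modulo a prime\<close>

lemma prime_dvd_pow_choose:
  assumes "prime p" "0 < j" "j < p ^ d"
  shows "p dvd (p ^ d choose j)"
proof (rule ccontr)
  assume "\<not> p dvd (p ^ d choose j)"
  then have coprime: "coprime (p ^ d) (p ^ d choose j)"
    using assms(1) by (simp add: prime_imp_coprime)
  obtain i where j: "j = Suc i" using assms(2) by (cases j) auto
  have "p ^ d * (p ^ d - 1 choose i) = (p ^ d choose j) * j"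
    using Suc_times_binomial_eq[of "p ^ d - 1" i] prime_gt_0_nat[OF assms(1)] by (simp add: j)
  then have "p ^ d dvd (p ^ d choose j) * j" by (metis dvd_triv_left)
  then have "p ^ d dvd j" using coprime by (simp add: coprime_dvd_mult_right_iff)
  then show False using assms(2,3) by (auto dest: dvd_imp_le)
qed

lemma pow_choose_cong:
  assumes "prime p"
  shows "[p ^ d choose j = of_bool (j = 0 \<or> j = p ^ d)] (mod p)"
proof -
  consider "j = 0 \<or> j = p ^ d" | "0 < j \<and> j < p ^ d" | "p ^ d < j" by linarith
  then show ?thesis
  proof cases
    case 2
    then show ?thesis using prime_dvd_pow_choose[OF assms] by (auto simp: cong_0_iff)
  qed (auto simp: binomial_eq_0)
qed

lemma card_subsets_with_sum_insert:
  fixes U :: "nat set"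
  assumes "finite U" "u \<notin> U"
  shows "card {V. V \<subseteq> insert u U \<and> \<Sum>V = b} =
    card {V. V \<subseteq> U \<and> \<Sum>V = b} + (if u \<le> b then card {V. V \<subseteq> U \<and> \<Sum>V = b - u} else 0)"
proof -
  let ?with_u = "insert u ` {V. V \<subseteq> U \<and> u + \<Sum>V = b}"
  have sum_insert: "\<Sum>(insert u V) = u + \<Sum>V" if "V \<subseteq> U" for V
    using that assms finite_subset by (metis subsetD sum.insert)
  have split: "{V. V \<subseteq> insert u U \<and> \<Sum>V = b} = {V. V \<subseteq> U \<and> \<Sum>V = b} \<union> ?with_u"
  proof (intro Set.set_eqI iffI)
    fix V assume V: "V \<in> {V. V \<subseteq> insert u U \<and> \<Sum>V = b}"
    show "V \<in> {V. V \<subseteq> U \<and> \<Sum>V = b} \<union> ?with_u"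
    proof (cases "u \<in> V")
      case True
      then have "V = insert u (V - {u})" "V - {u} \<subseteq> U" using V by auto
      then show ?thesis using V sum_insert by (metis (mono_tags, lifting) UnI2 image_eqI mem_Collect_eq)
    qed (use V in auto)
  qed (use sum_insert in auto)
  have "card {V. V \<subseteq> insert u U \<and> \<Sum>V = b} = card {V. V \<subseteq> U \<and> \<Sum>V = b} + card ?with_u"
    unfolding split using assms by (intro card_Un_disjoint) auto
  also have "card ?with_u = card {V. V \<subseteq> U \<and> u + \<Sum>V = b}"
    using assms(2) by (intro card_image inj_onI) (metis insert_ident mem_Collect_eq subsetD)
  also have "{V. V \<subseteq> U \<and> u + \<Sum>V = b} =
      (if u \<le> b then {V. V \<subseteq> U \<and> \<Sum>V = b - u} else {})"
    by auto
  finally show ?thesis by simp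
qed

lemma choose_sum_prime_powers_cong:
  assumes "prime p" "finite U" "U \<subseteq> range (\<lambda>d. p ^ d)"
  shows "[\<Sum>U choose b = card {V. V \<subseteq> U \<and> \<Sum>V = b}] (mod p)"
  using assms(2,3)
proof (induction U arbitrary: b rule: finite_induct)
  case empty
  have "{V. V \<subseteq> {} \<and> \<Sum>V = b} = (if b = 0 then {{}} else {})" by auto
  then show ?case by (simp add: binomial_eq_0)
next
  case (insert u U)
  obtain d where u: "u = p ^ d" using insert.prems by auto
  have "0 < u" using u prime_gt_0_nat[OF assms(1)] by simp
  have "\<Sum>(insert u U) choose b = (\<Sum>j\<le>b. (u choose j) * (\<Sum>U choose (b - j)))"
    using insert vandermonde[of u "\<Sum>U" b] by simp
  also have "[\<dots> = (\<Sum>j\<le>b. of_bool (j = 0 \<or> j = u) * (\<Sum>U choose (b - j)))] (mod p)"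
    by (intro cong_sum cong_mult cong_refl) (use pow_choose_cong[OF assms(1)] u in auto)
  also have "(\<Sum>j\<le>b. of_bool (j = 0 \<or> j = u) * (\<Sum>U choose (b - j))) =
      (\<Sum>j\<le>b. (if j = 0 then \<Sum>U choose (b - j) else 0) + (if j = u then \<Sum>U choose (b - j) else 0))"
    using \<open>0 < u\<close> by (intro sum.cong) auto
  also have "\<dots> = (\<Sum>U choose b) + (if u \<le> b then \<Sum>U choose (b - u) else 0)"
    by (simp add: sum.distrib)
  also have "[\<dots> = card {V. V \<subseteq> U \<and> \<Sum>V = b} +
      (if u \<le> b then card {V. V \<subseteq> U \<and> \<Sum>V = b - u} else 0)] (mod p)"
    using insert by (intro cong_add) auto
  finally show ?case
    using card_subsets_with_sum_insert[OF insert(1,2)] by simp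
qed

lemma pow_prime_cong:
  fixes a :: nat
  assumes "prime p"
  shows "[a ^ p = a] (mod p)"
proof (cases "p dvd a")
  case True
  then have "p dvd a ^ p"
    using prime_gt_0_nat[OF assms] by (meson dvd_power dvd_power_same dvd_trans)
  then have "[a ^ p = 0] (mod p)" "[a = 0] (mod p)"
    using True by (simp_all add: cong_0_iff)
  then show ?thesis by (metis cong_sym cong_trans)
next
  case False
  then have "[a ^ (p - 1) * a = 1 * a] (mod p)"
    by (intro cong_mult cong_refl fermat_theorem assms)
  moreover have "a ^ (p - 1) * a = a ^ p"
    using prime_gt_0_nat[OF assms] by (simp flip: power_Suc2)
  ultimately show ?thesis by simp
qed

lemma pow_prime_power_cong:
  fixes a :: nat
  assumes "prime p"
  shows "[a ^ (p ^ d) = a] (mod p)"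
proof (induction d)
  case (Suc d)
  have "a ^ (p ^ Suc d) = (a ^ (p ^ d)) ^ p"
    by (simp add: power_mult[symmetric] mult.commute)
  also have "[\<dots> = a ^ (p ^ d)] (mod p)" by (rule pow_prime_cong[OF assms])
  finally show ?case using Suc by (rule cong_trans)
qed simp

lemma pow_sum_prime_powers_cong:
  fixes a :: nat
  assumes "prime p" "finite W" "W \<subseteq> range (\<lambda>d. p ^ d)"
  shows "[a ^ \<Sum>W = a ^ card W] (mod p)"
  using assms(2,3)
proof (induction W rule: finite_induct)
  case (insert u W)
  obtain d where "u = p ^ d" using insert.prems by auto
  then have "[a ^ u * a ^ \<Sum>W = a * a ^ card W] (mod p)"
    using insert pow_prime_power_cong[OF assms(1)] by (intro cong_mult) auto
  then show ?case using insert by (simp add: power_add)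
qed simp

section \<open>Sums of distinct powers of a prime\<close>

lemma sum_powers_split:
  fixes p :: nat
  assumes "finite V"
  shows "(\<Sum>d\<in>V. p ^ d) = of_bool (0 \<in> V) + p * (\<Sum>d\<in>Suc -` V. p ^ d)"
proof -
  have split: "V = (V \<inter> {0}) \<union> Suc ` (Suc -` V)"
    by (auto simp: image_iff) (metis not0_implies_Suc)
  have "finite (Suc -` V)" using assms by (simp add: finite_vimageI)
  then have "(\<Sum>d\<in>V. p ^ d) = (\<Sum>d\<in>V \<inter> {0}. p ^ d) + (\<Sum>d\<in>Suc ` (Suc -` V). p ^ d)"
    by (subst split, intro sum.union_disjoint) (use assms in auto)
  also have "\<dots> = of_bool (0 \<in> V) + p * (\<Sum>d\<in>Suc -` V. p ^ d)"
    by (simp add: sum.reindex sum_distrib_left del: image_vimage_eq)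
  finally show ?thesis .
qed

lemma sum_powers_digit:
  fixes p :: nat
  assumes "finite V" "2 \<le> p"
  shows "(\<Sum>d\<in>V. p ^ d) div p ^ j mod p = of_bool (j \<in> V)"
  using assms(1)
proof (induction j arbitrary: V)
  case 0
  then show ?case using assms(2) by (subst sum_powers_split) auto
next
  case (Suc j)
  have "(\<Sum>d\<in>V. p ^ d) div p = (\<Sum>d\<in>Suc -` V. p ^ d)"
    using assms(2) by (subst sum_powers_split[OF Suc.prems]) simp
  then have "(\<Sum>d\<in>V. p ^ d) div p ^ Suc j = (\<Sum>d\<in>Suc -` V. p ^ d) div p ^ j"
    by (simp add: div_mult2_eq)
  then show ?case using Suc.IH[of "Suc -` V"] Suc.prems by (simp add: finite_vimageI)
qed

lemma inj_on_sum_powers: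
  fixes p :: nat
  assumes "2 \<le> p"
  shows "inj_on (\<lambda>V. \<Sum>d\<in>V. p ^ d) {V. finite V}"
proof (rule inj_onI, rule Set.set_eqI)
  fix V W j assume "V \<in> {V. finite V}" "W \<in> {V. finite V}" "(\<Sum>d\<in>V. p ^ d) = (\<Sum>d\<in>W. p ^ d)"
  then show "j \<in> V \<longleftrightarrow> j \<in> W"
    using sum_powers_digit[OF _ assms, of _ j] by (metis mem_Collect_eq of_bool_eq_iff)
qed

lemma Sum_prime_powers_eq:
  fixes p :: nat
  assumes "2 \<le> p" "U \<subseteq> range (\<lambda>d. p ^ d)"
  shows "\<Sum>U = (\<Sum>d\<in>{d. p ^ d \<in> U}. p ^ d)"
proof -
  have "U = (\<lambda>d. p ^ d) ` {d. p ^ d \<in> U}" using assms(2) by auto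
  moreover have "inj_on (\<lambda>d. p ^ d) {d. p ^ d \<in> U}" using assms(1) by (simp add: inj_on_def)
  ultimately show ?thesis by (metis sum.reindex_cong)
qed

lemma finite_prime_power_exponents:
  fixes p :: nat
  assumes "2 \<le> p" "finite U"
  shows "finite {d. p ^ d \<in> U}"
proof -
  have "inj (\<lambda>d. p ^ d)" using assms(1) by (simp add: inj_on_def)
  then show ?thesis using finite_vimageI[OF assms(2)] by (simp add: vimage_def)
qed

lemma inj_on_Sum_prime_powers:
  fixes p :: nat
  assumes "2 \<le> p"
  shows "inj_on Sum {U. finite U \<and> U \<subseteq> range (\<lambda>d. p ^ d)}"
proof (rule inj_onI)
  fix U W assume U: "U \<in> {U. finite U \<and> U \<subseteq> range (\<lambda>d. p ^ d)}"
    and W: "W \<in> {U. finite U \<and> U \<subseteq> range (\<lambda>d. p ^ d)}" and "\<Sum>U = \<Sum>W"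
  then have "{d. p ^ d \<in> U} = {d. p ^ d \<in> W}"
    using inj_on_sum_powers[OF assms] finite_prime_power_exponents[OF assms]
    by (auto simp: Sum_prime_powers_eq[OF assms] inj_on_def)
  then show "U = W" using U W by auto
qed

lemma Sum_prime_powers_mod:
  fixes p :: nat
  assumes "2 \<le> p" "finite U" "U \<subseteq> range (\<lambda>d. p ^ d)"
  shows "\<Sum>U mod p = of_bool (1 \<in> U)"
  using sum_powers_digit[OF finite_prime_power_exponents[OF assms(1,2)] assms(1), of 0]
  by (simp add: Sum_prime_powers_eq[OF assms(1,3)])

lemma Sum_psubset_less:
  fixes Y :: "nat set"
  assumes "finite Y" "X \<subset> Y" "0 \<notin> Y"
  shows "\<Sum>X < \<Sum>Y"
proof -
  obtain b where "b \<in> Y - X" using assms(2) by auto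
  then show ?thesis using assms by (intro sum_strict_mono2[of Y X b]) auto
qed

lemma proper_subset_sums_less:
  fixes E :: "nat set"
  assumes "finite E" "0 \<notin> E"
  shows "Sum ` {U. U \<subset> E} \<subseteq> {..<\<Sum>E}"
  using Sum_psubset_less[of E _, OF assms(1) _ assms(2)] by auto

lemma card_proper_subset_sums:
  fixes p :: nat
  assumes "2 \<le> p" "finite E" "E \<subseteq> range (\<lambda>d. p ^ d)"
  shows "card (Sum ` {U. U \<subset> E}) = 2 ^ card E - 1"
proof -
  have "{U. U \<subset> E} = Pow E - {E}" by auto
  moreover have "inj_on Sum (Pow E - {E})"
    using assms(2,3) finite_subset by (intro inj_on_subset[OF inj_on_Sum_prime_powers[OF assms(1)]]) auto
  ultimately show ?thesis using assms(2) by (simp add: card_image card_Pow card_Diff_singleton)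
qed

lemma Sum_prime_powers_neq_pred_power:
  fixes p :: nat
  assumes "prime p" "odd p" "0 < m" "finite U" "U \<subseteq> range (\<lambda>d. p ^ d)"
  shows "\<Sum>U \<noteq> p ^ m - 1"
proof
  assume Sum_eq: "\<Sum>U = p ^ m - 1"
  have "3 \<le> p" using prime_ge_2_nat[OF assms(1)] assms(2) by presburger
  obtain y where "p ^ m = p * (y + 1)"
    using assms(3) by (metis Suc_eq_plus1 Suc_pred neq0_conv power_eq_0_iff power_Suc prime_gt_0_nat assms(1))
  then have "p ^ m - 1 = (p - 1) + p * y" using \<open>3 \<le> p\<close> by (simp add: algebra_simps)
  moreover have "(p - 1 + p * y) mod p = p - 1" using \<open>3 \<le> p\<close> by (simp only: mod_mult_self2) simp
  ultimately have "(p ^ m - 1) mod p = p - 1" by simp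
  moreover have "\<Sum>U mod p \<le> 1"
    using Sum_prime_powers_mod[OF _ assms(4,5)] \<open>3 \<le> p\<close> by simp
  ultimately show False using Sum_eq \<open>3 \<le> p\<close> by simp
qed

(* This is where k > 1 enters: it provides an exponent d > 0, and p ^ d - 1 is congruent to -1
   modulo p, whereas sums of distinct powers of p are congruent to 0 or 1 (as p > 2). *)
lemma pred_prime_power_not_proper_subset_sum:
  fixes p :: nat
  assumes "prime p" "odd p" "finite D" "1 < card D"
  defines "E \<equiv> (\<lambda>d. p ^ d) ` D"
  shows "\<not> {..<\<Sum>E} \<subseteq> Sum ` {U. U \<subset> E}"
proof -
  have "2 \<le> p" using prime_ge_2_nat[OF assms(1)] .
  have "\<not> D \<subseteq> {0}" using assms(4) card_mono[of "{0}" D] by auto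
  then obtain d where "d \<in> D" "0 < d" by auto
  have "finite E" "p ^ d \<in> E" unfolding E_def using \<open>d \<in> D\<close> assms(3) by auto
  then have "p ^ d \<le> \<Sum>E" "0 < p ^ d"
    using member_le_sum[of "p ^ d" E "\<lambda>x. x"] \<open>2 \<le> p\<close> by simp_all
  then have "p ^ d - 1 \<in> {..<\<Sum>E}" by (simp only: lessThan_iff)
  moreover have "p ^ d - 1 \<notin> Sum ` {U. U \<subset> E}"
  proof
    assume "p ^ d - 1 \<in> Sum ` {U. U \<subset> E}"
    then obtain U where U: "U \<in> {U. U \<subset> E}" "p ^ d - 1 = \<Sum>U" by (rule imageE)
    then have "finite U" "U \<subseteq> range (\<lambda>d. p ^ d)" using assms(3) finite_subset unfolding E_def by auto
    then show False using Sum_prime_powers_neq_pred_power[OF assms(1,2) \<open>0 < d\<close>] U(2) by metis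
  qed
  ultimately show ?thesis by blast
qed

section \<open>Signed permutations as signed words\<close>

(* A signed permutation w of [n] is recorded by the word [w(1), ..., w(n)], and word_descents
   uses w(0) = 0. Allowing any set A of absolute values lets words be cut into blocks. *)
definition signed_words :: "int set \<Rightarrow> int list set" where
  "signed_words A = {xs. distinct (map abs xs) \<and> abs ` set xs = A \<and> 0 \<notin> set xs}"

definition word_descents :: "int list \<Rightarrow> nat set" where
  "word_descents xs = {i. i < length xs \<and> (0 # xs) ! i > xs ! i}"

lemma length_signed_word: "xs \<in> signed_words A \<Longrightarrow> length xs = card A"
  unfolding signed_words_def using distinct_card[of "map abs xs"] by auto

lemma distinct_signed_word: "xs \<in> signed_words A \<Longrightarrow> distinct xs"
  unfolding signed_words_def by (auto simp: distinct_map)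

lemma finite_signed_words:
  assumes "finite A"
  shows "finite (signed_words A)"
proof (rule finite_subset)
  have "x \<in> A \<union> uminus ` A" if "\<bar>x\<bar> \<in> A" for x :: int
    using that by (cases "x \<ge> 0") (auto simp: image_iff intro: bexI[where x="-x"])
  then show "signed_words A \<subseteq> {xs. set xs \<subseteq> A \<union> uminus ` A \<and> length xs = card A}"
    using length_signed_word unfolding signed_words_def by auto
  show "finite {xs. set xs \<subseteq> A \<union> uminus ` A \<and> length xs = card A}"
    using assms by (intro finite_lists_length_eq) simp
qed

definition perm_word :: "nat \<Rightarrow> (int \<Rightarrow> int) \<Rightarrow> int list" where
  "perm_word n w = map w [1..int n]"

definition word_perm :: "nat \<Rightarrow> int list \<Rightarrow> int \<Rightarrow> int" where
  "word_perm n xs j = (if j \<in> SB n then sgn j * xs ! (nat \<bar>j\<bar> - 1) else j)"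

lemma SB_iff: "j \<in> SB n \<longleftrightarrow> j \<noteq> 0 \<and> \<bar>j\<bar> \<le> int n"
  unfolding SB_def by auto

lemma finite_SB: "finite (SB n)"
  by (rule finite_subset[of _ "{- int n..int n}"]) (auto simp: SB_def)

lemma length_perm_word [simp]: "length (perm_word n w) = n"
  unfolding perm_word_def by simp

lemma nth_perm_word: "k < n \<Longrightarrow> perm_word n w ! k = w (int k + 1)"
  unfolding perm_word_def by (simp add: algebra_simps)

lemma signed_permsD:
  assumes "w \<in> signed_perms n"
  shows "inj_on w (SB n)" "w ` SB n = SB n" "\<And>j. j \<in> SB n \<Longrightarrow> w (-j) = - w j"
    "\<And>j. j \<notin> SB n \<Longrightarrow> w j = j"
  using assms unfolding signed_perms_def bij_betw_def by auto

lemma perm_word_in_signed_words: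
  assumes w: "w \<in> signed_perms n"
  shows "perm_word n w \<in> signed_words {1..int n}"
proof -
  note w = signed_permsD[OF w]
  have in_SB: "j \<in> {1..int n} \<Longrightarrow> j \<in> SB n" "j \<in> {1..int n} \<Longrightarrow> - j \<in> SB n" for j
    by (auto simp: SB_iff)
  have "inj_on (\<lambda>j. \<bar>w j\<bar>) {1..int n}"
  proof (rule inj_onI)
    fix i j assume ij: "i \<in> {1..int n}" "j \<in> {1..int n}" "\<bar>w i\<bar> = \<bar>w j\<bar>"
    then have "w i = w j \<or> w i = w (- j)" using w(3)[OF in_SB(1)[OF ij(2)]] by (auto simp: abs_eq_iff)
    then have "i = j \<or> i = - j" using inj_onD[OF w(1)] in_SB ij(1,2) by blast
    then show "i = j" using ij(1,2) by auto
  qed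
  have abs_in: "\<bar>w j\<bar> \<in> {1..int n}" if "j \<in> {1..int n}" for j
  proof -
    have "w j \<in> SB n" using w(2) in_SB(1)[OF that] by blast
    then show ?thesis by (auto simp: SB_iff)
  qed
  then have "(\<lambda>j. \<bar>w j\<bar>) ` {1..int n} = {1..int n}"
    using \<open>inj_on (\<lambda>j. \<bar>w j\<bar>) {1..int n}\<close> by (intro endo_inj_surj) auto
  moreover have "0 \<notin> w ` {1..int n}" using abs_in by fastforce
  moreover have "distinct (map (\<lambda>j. \<bar>w j\<bar>) [1..int n])"
    using \<open>inj_on (\<lambda>j. \<bar>w j\<bar>) {1..int n}\<close> by (simp add: distinct_map)
  ultimately show ?thesis unfolding signed_words_def perm_word_def by (simp add: comp_def image_image)
qed

lemma word_perm_perm_word: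
  assumes "w \<in> signed_perms n"
  shows "word_perm n (perm_word n w) = w"
proof
  fix j
  have "w (- j) = - w j" if "j \<in> SB n" using that signed_permsD(3)[OF assms] by simp
  then show "word_perm n (perm_word n w) j = w j"
    using signed_permsD(4)[OF assms, of j]
    by (auto simp: word_perm_def SB_iff nth_perm_word sgn_if abs_if nat_diff_distrib)
qed

lemma signed_word_letter:
  assumes "xs \<in> signed_words {1..int n}" "j \<in> SB n"
  shows "nat \<bar>j\<bar> - 1 < length xs" "\<bar>xs ! (nat \<bar>j\<bar> - 1)\<bar> \<in> {1..int n}" "xs ! (nat \<bar>j\<bar> - 1) \<noteq> 0"
proof -
  show "nat \<bar>j\<bar> - 1 < length xs" using assms length_signed_word[OF assms(1)] by (auto simp: SB_iff)
  then have "xs ! (nat \<bar>j\<bar> - 1) \<in> set xs" by simp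
  then show "\<bar>xs ! (nat \<bar>j\<bar> - 1)\<bar> \<in> {1..int n}" "xs ! (nat \<bar>j\<bar> - 1) \<noteq> 0"
    using assms(1) unfolding signed_words_def by auto
qed

lemma abs_word_perm:
  assumes "j \<in> SB n"
  shows "\<bar>word_perm n xs j\<bar> = \<bar>xs ! (nat \<bar>j\<bar> - 1)\<bar>"
  using assms by (simp add: word_perm_def abs_mult abs_sgn_eq SB_iff)

lemma inj_on_word_perm:
  assumes xs: "xs \<in> signed_words {1..int n}"
  shows "inj_on (word_perm n xs) (SB n)"
proof (rule inj_onI)
  let ?k = "\<lambda>j::int. nat \<bar>j\<bar> - 1"
  fix i j assume ij: "i \<in> SB n" "j \<in> SB n" "word_perm n xs i = word_perm n xs j"
  then have "\<bar>xs ! ?k i\<bar> = \<bar>xs ! ?k j\<bar>"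
    using abs_word_perm[where xs = xs, OF ij(1)] abs_word_perm[where xs = xs, OF ij(2)] by simp
  then have "map abs xs ! ?k i = map abs xs ! ?k j"
    using signed_word_letter(1)[OF xs ij(1)] signed_word_letter(1)[OF xs ij(2)] by simp
  then have same_index: "?k i = ?k j"
    using nth_eq_iff_index_eq[of "map abs xs"] xs signed_word_letter(1)[OF xs] ij(1,2)
    unfolding signed_words_def by simp
  have "sgn i * xs ! ?k i = word_perm n xs i" using ij(1) by (simp add: word_perm_def)
  also have "\<dots> = word_perm n xs j" by (rule ij(3))
  also have "\<dots> = sgn j * xs ! ?k i" using ij(2) same_index by (simp add: word_perm_def)
  finally have "sgn i = sgn j" using signed_word_letter(3)[OF xs ij(1)] by simp
  moreover have "\<bar>i\<bar> = \<bar>j\<bar>" using same_index ij(1,2) unfolding SB_iff by arith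
  ultimately show "i = j" by (metis abs_mult_sgn)
qed

lemma word_perm_in_signed_perms:
  assumes xs: "xs \<in> signed_words {1..int n}"
  shows "word_perm n xs \<in> signed_perms n"
proof -
  have "word_perm n xs j \<in> SB n" if "j \<in> SB n" for j
  proof -
    have "\<bar>word_perm n xs j\<bar> \<in> {1..int n}"
      using signed_word_letter(2)[OF xs that] abs_word_perm[OF that] by simp
    then show ?thesis by (auto simp: SB_iff)
  qed
  then have "word_perm n xs ` SB n = SB n"
    using inj_on_word_perm[OF xs] finite_SB by (intro endo_inj_surj) auto
  moreover have "word_perm n xs (- j) = - word_perm n xs j" if "j \<in> SB n" for j
    using that by (simp add: word_perm_def SB_iff)
  moreover have "word_perm n xs j = j" if "j \<notin> SB n" for j
    using that by (simp add: word_perm_def)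
  ultimately show ?thesis using inj_on_word_perm[OF xs] unfolding signed_perms_def bij_betw_def by blast
qed

lemma perm_word_word_perm:
  assumes "xs \<in> signed_words {1..int n}"
  shows "perm_word n (word_perm n xs) = xs"
proof (rule nth_equalityI)
  show "length (perm_word n (word_perm n xs)) = length xs"
    using length_signed_word[OF assms] by simp
  fix k assume "k < length (perm_word n (word_perm n xs))"
  then show "perm_word n (word_perm n xs) ! k = xs ! k"
    by (simp add: nth_perm_word word_perm_def SB_iff nat_add_distrib)
qed

lemma descents_B_perm_word:
  assumes "w \<in> signed_perms n"
  shows "descents_B n w = word_descents (perm_word n w)"
proof -
  have "w 0 = 0" using signed_permsD(4)[OF assms, of 0] by (simp add: SB_iff)
  then have "(0 # perm_word n w) ! i = w (int i)" if "i < n" for i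
    using that by (cases i) (simp_all add: nth_perm_word add.commute)
  then show ?thesis
    unfolding descents_B_def word_descents_def by (auto simp: nth_perm_word add.commute)
qed

lemma bij_betw_perm_word: "bij_betw (perm_word n) (signed_perms n) (signed_words {1..int n})"
  by (rule bij_betw_byWitness[where f' = "word_perm n"])
    (auto simp: word_perm_perm_word perm_word_word_perm perm_word_in_signed_words word_perm_in_signed_perms)

lemma card_signed_perms_with_descents:
  "card {w \<in> signed_perms n. descents_B n w = S} = card {xs \<in> signed_words {1..int n}. word_descents xs = S}"
proof (rule bij_betw_same_card, rule bij_betw_subset[OF bij_betw_perm_word])
  show "perm_word n ` {w \<in> signed_perms n. descents_B n w = S} = {xs \<in> signed_words {1..int n}. word_descents xs = S}"
  proof (intro Set.set_eqI iffI)
    fix xs assume "xs \<in> {xs \<in> signed_words {1..int n}. word_descents xs = S}"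
    then have "word_perm n xs \<in> {w \<in> signed_perms n. descents_B n w = S}"
      "xs = perm_word n (word_perm n xs)"
      using word_perm_in_signed_perms descents_B_perm_word perm_word_word_perm by auto
    then show "xs \<in> perm_word n ` {w \<in> signed_perms n. descents_B n w = S}" by blast
  qed (auto simp: perm_word_in_signed_words descents_B_perm_word)
qed auto

section \<open>Counting signed words by descents\<close>

lemma append_in_signed_words_iff:
  "ys @ zs \<in> signed_words A \<longleftrightarrow>
    ys \<in> signed_words (A - abs ` set zs) \<and> zs \<in> signed_words (abs ` set zs) \<and>
    abs ` set zs \<subseteq> A \<and> abs ` set ys \<inter> abs ` set zs = {}"
  unfolding signed_words_def by auto

lemma sorted_wrt_less_iff_nth_Suc:
  "sorted_wrt (<) (zs :: int list) \<longleftrightarrow> (\<forall>j. Suc j < length zs \<longrightarrow> zs ! j < zs ! Suc j)"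
  by (rule sorted_wrt_iff_nth_Suc_transp) (auto simp: transp_def)

lemma word_descents_subset: "word_descents xs \<subseteq> {..<length xs}"
  unfolding word_descents_def by auto

lemma mem_word_descents_append:
  assumes "length ys = t"
  shows "i < t \<Longrightarrow> i \<in> word_descents (ys @ zs) \<longleftrightarrow> i \<in> word_descents ys"
    and "Suc (t + j) \<in> word_descents (ys @ zs) \<longleftrightarrow> Suc j < length zs \<and> zs ! j > zs ! Suc j"
proof -
  assume "i < t"
  then have "(0 # ys @ zs) ! i = (0 # ys) ! i" "(ys @ zs) ! i = ys ! i"
    using assms by (simp_all add: nth_append nth_Cons split: nat.split)
  then show "i \<in> word_descents (ys @ zs) \<longleftrightarrow> i \<in> word_descents ys"
    using \<open>i < t\<close> assms unfolding word_descents_def by auto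
next
  have "(0 # ys @ zs) ! Suc (t + j) = zs ! j" "(ys @ zs) ! Suc (t + j) = zs ! Suc j"
    using assms by (simp_all add: nth_append)
  then show "Suc (t + j) \<in> word_descents (ys @ zs) \<longleftrightarrow> Suc j < length zs \<and> zs ! j > zs ! Suc j"
    unfolding word_descents_def using assms by auto
qed

lemma word_descents_append_subset_iff:
  assumes "length ys = t" "zs \<noteq> []" "S \<subseteq> {..<t}" "distinct zs"
  shows "word_descents (ys @ zs) \<subseteq> insert t S \<longleftrightarrow> word_descents ys \<subseteq> S \<and> sorted_wrt (<) zs"
proof -
  note low = mem_word_descents_append(1)[OF assms(1)] and high = mem_word_descents_append(2)[OF assms(1)]
  show ?thesis
  proof
    assume H: "word_descents (ys @ zs) \<subseteq> insert t S"
    have "word_descents ys \<subseteq> S"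
      using H low word_descents_subset[of ys] assms(1) by (auto simp: subset_iff)
    moreover have "sorted_wrt (<) zs" unfolding sorted_wrt_less_iff_nth_Suc
    proof (intro allI impI)
      fix j assume j: "Suc j < length zs"
      have "Suc (t + j) \<notin> insert t S" using assms(3) by auto
      then have "Suc (t + j) \<notin> word_descents (ys @ zs)" using H by blast
      then have "\<not> zs ! j > zs ! Suc j" using high j by auto
      moreover have "zs ! j \<noteq> zs ! Suc j" using assms(4) j nth_eq_iff_index_eq by fastforce
      ultimately show "zs ! j < zs ! Suc j" by simp
    qed
    ultimately show "word_descents ys \<subseteq> S \<and> sorted_wrt (<) zs" by simp
  next
    assume H: "word_descents ys \<subseteq> S \<and> sorted_wrt (<) zs"
    show "word_descents (ys @ zs) \<subseteq> insert t S"
    proof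
      fix i assume i: "i \<in> word_descents (ys @ zs)"
      consider "i < t" | "i = t" | j where "i = Suc (t + j)"
        by (metis add_Suc_right less_imp_Suc_add linorder_neqE_nat)
      then show "i \<in> insert t S"
      proof cases
        case 1
        then show ?thesis using low i H by auto
      next
        case 3
        then show ?thesis using H high i unfolding sorted_wrt_less_iff_nth_Suc by force
      qed simp
    qed
  qed
qed

lemma word_descents_empty_iff:
  assumes "distinct (0 # xs)"
  shows "word_descents xs = {} \<longleftrightarrow> sorted_wrt (<) (0 # xs)"
  unfolding sorted_wrt_less_iff_nth_Suc
proof
  assume H: "word_descents xs = {}"
  show "\<forall>i. Suc i < length (0 # xs) \<longrightarrow> (0 # xs) ! i < (0 # xs) ! Suc i"
  proof (intro allI impI)
    fix i assume i: "Suc i < length (0 # xs)"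
    then have "\<not> (0 # xs) ! i > xs ! i" using H unfolding word_descents_def by auto
    moreover have "(0 # xs) ! i \<noteq> (0 # xs) ! Suc i"
      using nth_eq_iff_index_eq[OF assms, of i "Suc i"] i by simp
    ultimately show "(0 # xs) ! i < (0 # xs) ! Suc i" by simp
  qed
qed (fastforce simp: word_descents_def)

lemma signed_words_without_descents:
  assumes "finite A" "A \<subseteq> {0<..}"
  shows "{xs \<in> signed_words A. word_descents xs = {}} = {sorted_list_of_set A}"
proof (intro Set.set_eqI iffI)
  fix xs assume "xs \<in> {xs \<in> signed_words A. word_descents xs = {}}"
  then have xs: "xs \<in> signed_words A" "word_descents xs = {}" by auto
  have "distinct (0 # xs)" using distinct_signed_word[OF xs(1)] xs(1) unfolding signed_words_def by auto
  then have sorted: "sorted_wrt (<) (0 # xs)" using word_descents_empty_iff xs(2) by blast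
  then have "abs ` set xs = set xs" by (auto simp: image_iff) (metis abs_of_pos)
  then have "set xs = A" using xs(1) unfolding signed_words_def by simp
  then have "sorted_list_of_set A = xs"
    using sorted assms(1) by (intro strict_sorted_equal) auto
  then show "xs \<in> {sorted_list_of_set A}" by simp
next
  fix xs assume "xs \<in> {sorted_list_of_set A}"
  then have xs: "xs = sorted_list_of_set A" by simp
  have pos: "\<forall>x\<in>set xs. 0 < x" using xs assms by auto
  then have "abs ` set xs = set xs" by (auto simp: image_iff) (metis abs_of_pos)
  moreover have "inj_on abs (set xs)" using pos by (intro inj_onI) (metis abs_of_pos)
  ultimately have "xs \<in> signed_words A" unfolding signed_words_def using xs assms pos by (auto simp: distinct_map)
  moreover have "sorted_wrt (<) (0 # xs)" using xs assms pos by simp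
  ultimately show "xs \<in> {xs \<in> signed_words A. word_descents xs = {}}"
    using word_descents_empty_iff distinct_signed_word pos by fastforce
qed

definition signings :: "int set \<Rightarrow> int set set" where
  "signings B = {X. 0 \<notin> X \<and> inj_on abs X \<and> abs ` X = B}"

lemma signing_in_signings:
  assumes "B \<subseteq> {0<..}" "C \<subseteq> B"
  shows "(B - C) \<union> uminus ` C \<in> signings B"
proof -
  have sign: "(0 < z \<and> z \<in> B - C) \<or> (z < 0 \<and> - z \<in> C)" if "z \<in> (B - C) \<union> uminus ` C" for z
    using that assms by auto
  have "inj_on abs ((B - C) \<union> uminus ` C)"
  proof (rule inj_onI)
    fix x y assume "x \<in> (B - C) \<union> uminus ` C" "y \<in> (B - C) \<union> uminus ` C" "\<bar>x\<bar> = \<bar>y\<bar>"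
    then show "x = y" using sign[of x] sign[of y] by (auto simp: abs_if split: if_splits)
  qed
  moreover have "abs ` ((B - C) \<union> uminus ` C) = B"
  proof (intro Set.set_eqI iffI)
    fix b assume "b \<in> B"
    then have "0 < b" using assms(1) by auto
    show "b \<in> abs ` ((B - C) \<union> uminus ` C)"
    proof (cases "b \<in> C")
      case True
      then show ?thesis using \<open>0 < b\<close> by (intro rev_image_eqI[of "- b"]) auto
    next
      case False
      then show ?thesis using \<open>b \<in> B\<close> \<open>0 < b\<close> by (intro rev_image_eqI[of b]) auto
    qed
  next
    fix b assume "b \<in> abs ` ((B - C) \<union> uminus ` C)"
    then obtain z where "z \<in> (B - C) \<union> uminus ` C" "b = \<bar>z\<bar>" by blast
    then show "b \<in> B" using sign[of z] assms(2) by auto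
  qed
  ultimately show ?thesis unfolding signings_def using sign by fastforce
qed

lemma signings_eq_negated_part:
  assumes "X \<in> signings B"
  shows "(B - {b \<in> B. - b \<in> X}) \<union> uminus ` {b \<in> B. - b \<in> X} = X"
proof -
  have X: "0 \<notin> X" "inj_on abs X" "abs ` X = B" using assms unfolding signings_def by auto
  show ?thesis
  proof (intro Set.set_eqI iffI)
    fix x assume "x \<in> (B - {b \<in> B. - b \<in> X}) \<union> uminus ` {b \<in> B. - b \<in> X}"
    then consider "x \<in> B" "- x \<notin> X" | "- x \<in> B" "x \<in> X" by auto
    then show "x \<in> X"
    proof cases
      case 1
      then obtain y where "y \<in> X" "\<bar>y\<bar> = x" using X(3) by auto
      then show ?thesis using 1(2) by (cases "y \<ge> 0") auto
    qed
  next
    fix x assume x: "x \<in> X"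
    show "x \<in> (B - {b \<in> B. - b \<in> X}) \<union> uminus ` {b \<in> B. - b \<in> X}"
    proof (cases "x > 0")
      case True
      have "- x \<notin> X"
      proof
        assume "- x \<in> X"
        then have "- x = x" using inj_onD[OF X(2), of "- x" x] x by simp
        then show False using True by simp
      qed
      moreover have "x \<in> B" using x X(3) True by force
      ultimately show ?thesis by simp
    next
      case False
      then have "- x \<in> B" using x X(3) by force
      then show ?thesis using x by (auto simp: image_iff intro!: bexI[where x = "- x"])
    qed
  qed
qed

lemma bij_betw_signings:
  assumes "B \<subseteq> {0<..}"
  shows "bij_betw (\<lambda>C. (B - C) \<union> uminus ` C) (Pow B) (signings B)"
proof (rule bij_betw_byWitness[where f' = "\<lambda>X. {b \<in> B. - b \<in> X}"])
  have "- b \<notin> B" if "b \<in> B" for b using that assms by (smt (verit) greaterThan_iff subsetD)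
  moreover have "- b \<in> uminus ` C \<longleftrightarrow> b \<in> C" for b :: int and C by force
  ultimately show "\<forall>C\<in>Pow B. {b \<in> B. - b \<in> (B - C) \<union> uminus ` C} = C" by auto
qed (use signing_in_signings[OF assms] signings_eq_negated_part in auto)

lemma card_sorted_signed_words:
  assumes "finite B" "B \<subseteq> {0<..}"
  shows "card {zs \<in> signed_words B. sorted_wrt (<) zs} = 2 ^ card B"
proof -
  have "bij_betw set {zs \<in> signed_words B. sorted_wrt (<) zs} (signings B)"
  proof (rule bij_betw_imageI)
    show "inj_on set {zs \<in> signed_words B. sorted_wrt (<) zs}"
      by (intro inj_onI) (simp add: sorted_distinct_set_unique strict_sorted_iff)
    show "set ` {zs \<in> signed_words B. sorted_wrt (<) zs} = signings B"
    proof (intro Set.set_eqI iffI)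
      fix X assume "X \<in> set ` {zs \<in> signed_words B. sorted_wrt (<) zs}"
      then show "X \<in> signings B" unfolding signed_words_def signings_def by (auto simp: distinct_map)
    next
      fix X assume X: "X \<in> signings B"
      then have "finite X" using assms(1) unfolding signings_def by (auto simp: finite_image_iff)
      then have "sorted_list_of_set X \<in> {zs \<in> signed_words B. sorted_wrt (<) zs}"
        using X unfolding signings_def signed_words_def by (simp add: distinct_map)
      then show "X \<in> set ` {zs \<in> signed_words B. sorted_wrt (<) zs}"
        using \<open>finite X\<close> by (intro rev_image_eqI) auto
    qed
  qed
  then have "card {zs \<in> signed_words B. sorted_wrt (<) zs} = card (Pow B)"
    using bij_betw_same_card bij_betw_signings[OF assms(2)] by metis
  then show ?thesis using assms(1) by (simp add: card_Pow)
qed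

lemma signed_words_descents_insert_eq:
  assumes "finite A" "t < card A" "S \<subseteq> {..<t}"
  shows "{xs \<in> signed_words A. word_descents xs \<subseteq> insert t S} =
    (\<Union>B\<in>{B. B \<subseteq> A \<and> card B = card A - t}. (\<lambda>(ys, zs). ys @ zs) `
      ({ys \<in> signed_words (A - B). word_descents ys \<subseteq> S} \<times> {zs \<in> signed_words B. sorted_wrt (<) zs}))"
proof (intro Set.set_eqI iffI)
  fix xs assume "xs \<in> {xs \<in> signed_words A. word_descents xs \<subseteq> insert t S}"
  then have xs: "xs \<in> signed_words A" "word_descents xs \<subseteq> insert t S" by auto
  define ys zs where "ys = take t xs" and "zs = drop t xs"
  define B where "B = abs ` set zs"
  have "length xs = card A" using length_signed_word[OF xs(1)] .
  then have xs_eq: "xs = ys @ zs" and "length ys = t" "zs \<noteq> []"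
    using assms(2) unfolding ys_def zs_def by auto
  have words: "ys \<in> signed_words (A - B)" "zs \<in> signed_words B" "B \<subseteq> A"
    using xs(1) unfolding xs_eq append_in_signed_words_iff B_def by auto
  have "card B = card A - t"
    using length_signed_word[OF words(2)] \<open>length xs = card A\<close> \<open>length ys = t\<close> xs_eq by simp
  moreover have "word_descents ys \<subseteq> S \<and> sorted_wrt (<) zs"
    using word_descents_append_subset_iff[OF \<open>length ys = t\<close> \<open>zs \<noteq> []\<close> assms(3)
        distinct_signed_word[OF words(2)]] xs(2) xs_eq by simp
  ultimately show "xs \<in> (\<Union>B\<in>{B. B \<subseteq> A \<and> card B = card A - t}. (\<lambda>(ys, zs). ys @ zs) `
      ({ys \<in> signed_words (A - B). word_descents ys \<subseteq> S} \<times> {zs \<in> signed_words B. sorted_wrt (<) zs}))"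
    using words xs_eq by (intro UN_I[of B]) (auto intro!: rev_image_eqI[of "(ys, zs)"])
next
  fix xs assume "xs \<in> (\<Union>B\<in>{B. B \<subseteq> A \<and> card B = card A - t}. (\<lambda>(ys, zs). ys @ zs) `
      ({ys \<in> signed_words (A - B). word_descents ys \<subseteq> S} \<times> {zs \<in> signed_words B. sorted_wrt (<) zs}))"
  then obtain B ys zs where B: "B \<subseteq> A" "card B = card A - t"
    and ys: "ys \<in> signed_words (A - B)" "word_descents ys \<subseteq> S"
    and zs: "zs \<in> signed_words B" "sorted_wrt (<) zs" and xs_eq: "xs = ys @ zs" by auto
  have "finite B" using B(1) assms(1) finite_subset by blast
  then have "length ys = t" "zs \<noteq> []"
    using length_signed_word[OF ys(1)] length_signed_word[OF zs(1)] B assms(1,2)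
    by (auto simp: card_Diff_subset)
  moreover have "abs ` set zs = B" "abs ` set ys = A - B"
    using zs(1) ys(1) unfolding signed_words_def by auto
  ultimately show "xs \<in> {xs \<in> signed_words A. word_descents xs \<subseteq> insert t S}"
    using word_descents_append_subset_iff[OF _ _ assms(3) distinct_signed_word[OF zs(1)]] ys zs B
    unfolding xs_eq by (auto simp: append_in_signed_words_iff)
qed

lemma card_signed_words_descents_insert:
  assumes "finite A" "A \<subseteq> {0<..}" "t < card A" "S \<subseteq> {..<t}"
    and count: "\<And>A'. A' \<subseteq> A \<Longrightarrow> card A' = t \<Longrightarrow> card {ys \<in> signed_words A'. word_descents ys \<subseteq> S} = c"
  shows "card {xs \<in> signed_words A. word_descents xs \<subseteq> insert t S} = (card A choose t) * 2 ^ (card A - t) * c"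
proof -
  let ?I = "{B. B \<subseteq> A \<and> card B = card A - t}"
  let ?X = "\<lambda>B. {ys \<in> signed_words (A - B). word_descents ys \<subseteq> S}"
  let ?Y = "\<lambda>B. {zs \<in> signed_words B. sorted_wrt (<) zs}"
  let ?app = "\<lambda>(ys, zs). ys @ zs :: int list"
  have card_diff: "card (A - B) = t" if "B \<in> ?I" for B
    using that assms(1,3) by (auto simp: card_Diff_subset finite_subset)
  have piece: "card (?app ` (?X B \<times> ?Y B)) = c * 2 ^ (card A - t)" if B: "B \<in> ?I" for B
  proof -
    have "inj_on ?app (?X B \<times> ?Y B)"
      using length_signed_word card_diff[OF B] by (intro inj_onI) (auto simp: append_eq_append_conv)
    moreover have "card (?X B) = c" using count card_diff[OF B] by auto
    moreover have "card (?Y B) = 2 ^ (card A - t)"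
      using card_sorted_signed_words[of B] B assms(1,2) finite_subset by fastforce
    ultimately show ?thesis by (simp add: card_image card_cartesian_product)
  qed
  have disjoint: "?app ` (?X B \<times> ?Y B) \<inter> ?app ` (?X B' \<times> ?Y B') = {}"
    if B: "B \<in> ?I" "B' \<in> ?I" "B \<noteq> B'" for B B'
  proof -
    have "B = B'" if "ys \<in> ?X B" "zs \<in> ?Y B" "ys' \<in> ?X B'" "zs' \<in> ?Y B'" "ys @ zs = ys' @ zs'"
      for ys zs ys' zs'
    proof -
      have "length ys = t" "length ys' = t"
        using that(1,3) length_signed_word card_diff B(1,2) by auto
      then have "zs = zs'" using that(5) by simp
      then show "B = B'" using that(2,4) unfolding signed_words_def by auto
    qed
    then show ?thesis using B(3) by fastforce
  qed
  have "card {xs \<in> signed_words A. word_descents xs \<subseteq> insert t S} = (\<Sum>B\<in>?I. card (?app ` (?X B \<times> ?Y B)))"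
  proof (unfold signed_words_descents_insert_eq[OF assms(1,3,4)], intro card_UN_disjoint ballI impI)
    fix B assume "B \<in> ?I"
    then have "finite B" "finite (A - B)" using assms(1) finite_subset by auto
    then show "finite (?app ` (?X B \<times> ?Y B))" using finite_signed_words by auto
  qed (use assms(1) disjoint in auto)
  also have "\<dots> = card ?I * (c * 2 ^ (card A - t))" using piece by simp
  also have "card ?I = card A choose t"
    using n_subsets[OF assms(1), of "card A - t"] binomial_symmetric[of t "card A"] assms(3) by simp
  finally show ?thesis by simp
qed

(* For L > t_1 > ... > t_h, alphaB L [t_1, ..., t_h] counts the signed words of length L with
   descents in {t_1, ..., t_h}: the letters after position t_1 form an increasing block, fixed by
   the choice of their L - t_1 absolute values and of their signs. *)
fun alphaB :: "nat \<Rightarrow> nat list \<Rightarrow> nat" where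
  "alphaB L [] = 1"
| "alphaB L (t # ts) = (L choose t) * 2 ^ (L - t) * alphaB t ts"

lemma card_signed_words_descents_subset:
  assumes "finite A" "A \<subseteq> {0<..}" "sorted_wrt (>) ts" "\<forall>t\<in>set ts. t < card A"
  shows "card {xs \<in> signed_words A. word_descents xs \<subseteq> set ts} = alphaB (card A) ts"
  using assms
proof (induction ts arbitrary: A)
  case Nil
  then show ?case using signed_words_without_descents[of A] by simp
next
  case (Cons t ts)
  have "card {xs \<in> signed_words A. word_descents xs \<subseteq> insert t (set ts)} =
      (card A choose t) * 2 ^ (card A - t) * alphaB t ts"
  proof (rule card_signed_words_descents_insert)
    fix A' assume "A' \<subseteq> A" "card A' = t"
    then show "card {ys \<in> signed_words A'. word_descents ys \<subseteq> set ts} = alphaB t ts"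
      using Cons.IH[of A'] Cons.prems finite_subset by auto
  qed (use Cons.prems in auto)
  then show ?case by simp
qed

section \<open>Chains of subsets and ribbon numbers modulo p\<close>

definition chain_weight :: "nat set \<Rightarrow> nat set list \<Rightarrow> int" where
  "chain_weight E Us = 2 ^ (card E - card (hd (Us @ [E])))"

definition sum_chains :: "nat set \<Rightarrow> nat list \<Rightarrow> nat set list set" where
  "sum_chains E ts = {Us. sorted_wrt (\<subset>) (Us @ [E]) \<and> map Sum Us = ts}"

lemma finite_sum_chains:
  assumes "finite E"
  shows "finite (sum_chains E ts)"
proof (rule finite_subset)
  show "sum_chains E ts \<subseteq> {Us. set Us \<subseteq> Pow E \<and> length Us = length ts}"
    unfolding sum_chains_def by (auto simp: sorted_wrt_append dest: arg_cong[where f = length])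
  show "finite {Us. set Us \<subseteq> Pow E \<and> length Us = length ts}"
    using assms by (intro finite_lists_length_eq) simp
qed

lemma sum_chains_snoc:
  assumes "finite U" "0 \<notin> U" "t < \<Sum>U"
  shows "sum_chains U (ts @ [t]) = (\<Union>V\<in>{V. V \<subseteq> U \<and> \<Sum>V = t}. (\<lambda>Us. Us @ [V]) ` sum_chains V ts)"
proof (intro Set.set_eqI iffI)
  fix Ws assume "Ws \<in> sum_chains U (ts @ [t])"
  then obtain Us V where "Ws = Us @ [V]" "sorted_wrt (\<subset>) (Us @ [V, U])" "map Sum Us = ts" "\<Sum>V = t"
    unfolding sum_chains_def by (cases Ws rule: rev_cases) auto
  then show "Ws \<in> (\<Union>V\<in>{V. V \<subseteq> U \<and> \<Sum>V = t}. (\<lambda>Us. Us @ [V]) ` sum_chains V ts)"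
    unfolding sum_chains_def by (auto simp: sorted_wrt_append)
next
  fix Ws assume "Ws \<in> (\<Union>V\<in>{V. V \<subseteq> U \<and> \<Sum>V = t}. (\<lambda>Us. Us @ [V]) ` sum_chains V ts)"
  then obtain V Us where V: "V \<subseteq> U" "\<Sum>V = t" and Ws: "Ws = Us @ [V]"
    and chain: "sorted_wrt (\<subset>) (Us @ [V])" "map Sum Us = ts"
    unfolding sum_chains_def by auto
  have "V \<subset> U" using V assms(3) by auto
  then have "sorted_wrt (\<subset>) (Us @ [V, U])"
    using chain(1) by (auto simp: sorted_wrt_append)
  then show "Ws \<in> sum_chains U (ts @ [t])" using Ws V chain unfolding sum_chains_def by simp
qed

lemma chain_weight_snoc:
  assumes "finite U" "V \<subseteq> U" "sorted_wrt (\<subset>) (Us @ [V])"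
  shows "chain_weight U (Us @ [V]) = 2 ^ (card U - card V) * chain_weight V Us"
proof -
  have "hd (Us @ [V]) \<subseteq> V" using assms(3) by (cases Us) (auto simp: sorted_wrt_append)
  moreover have "finite V" using assms(1,2) finite_subset by blast
  ultimately have "card (hd (Us @ [V])) \<le> card V" "card V \<le> card U"
    using assms(1,2) by (simp_all add: card_mono)
  moreover have "hd (Us @ [V, U]) = hd (Us @ [V])" by (cases Us) auto
  ultimately show ?thesis
    unfolding chain_weight_def by (simp add: power_add[symmetric])
qed

lemma sum_chain_weights_snoc:
  assumes "finite U" "V \<subseteq> U"
  shows "(\<Sum>Us\<in>sum_chains V ts. chain_weight U (Us @ [V])) =
    2 ^ (card U - card V) * (\<Sum>Us\<in>sum_chains V ts. chain_weight V Us)"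
  using assms chain_weight_snoc unfolding sum_chains_def by (simp add: sum_distrib_left)

lemma sum_sum_chains_snoc:
  assumes "finite U" "0 \<notin> U" "t < \<Sum>U"
  shows "(\<Sum>Ws\<in>sum_chains U (ts @ [t]). g Ws) =
    (\<Sum>V\<in>{V. V \<subseteq> U \<and> \<Sum>V = t}. \<Sum>Us\<in>sum_chains V ts. g (Us @ [V]))"
proof -
  let ?I = "{V. V \<subseteq> U \<and> \<Sum>V = t}"
  have "(\<Sum>Ws\<in>sum_chains U (ts @ [t]). g Ws) = (\<Sum>V\<in>?I. \<Sum>Ws\<in>(\<lambda>Us. Us @ [V]) ` sum_chains V ts. g Ws)"
    unfolding sum_chains_snoc[OF assms]
  proof (intro sum.UNION_disjoint ballI impI)
    show "finite ?I" using assms(1) by simp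
    show "finite ((\<lambda>Us. Us @ [V]) ` sum_chains V ts)" if "V \<in> ?I" for V
      using that assms(1) finite_subset by (intro finite_imageI finite_sum_chains) auto
    show "(\<lambda>Us. Us @ [V]) ` sum_chains V ts \<inter> (\<lambda>Us. Us @ [W]) ` sum_chains W ts = {}" if "V \<noteq> W" for V W
      using that by auto
  qed
  also have "\<dots> = (\<Sum>V\<in>?I. \<Sum>Us\<in>sum_chains V ts. g (Us @ [V]))"
    by (intro sum.cong refl sum.reindex[unfolded comp_def] inj_onI) simp
  finally show ?thesis .
qed

lemma two_pow_card_diff_cong:
  assumes "prime p" "finite U" "U \<subseteq> range (\<lambda>d. p ^ d)" "V \<subseteq> U"
  shows "[2 ^ (card U - card V) = (2::int) ^ (\<Sum>U - \<Sum>V)] (mod int p)"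
proof -
  have "finite V" using assms(2,4) finite_subset by blast
  then have "card U - card V = card (U - V)" "\<Sum>U - \<Sum>V = \<Sum>(U - V)"
    using assms(2,4) by (auto simp: card_Diff_subset sum_diff_nat)
  moreover have "[2 ^ \<Sum>(U - V) = 2 ^ card (U - V)] (mod p)"
    using assms(2,3) by (intro pow_sum_prime_powers_cong[OF assms(1)]) auto
  ultimately show ?thesis by (metis cong_int_iff cong_sym of_nat_numeral of_nat_power)
qed

(* Modulo p, choosing t letters among \<Sum>U amounts to choosing V \<subseteq> U with \<Sum>V = t, and
   the factor 2 ^ (\<Sum>U - \<Sum>V) becomes 2 ^ card (U - V). *)
lemma alphaB_cong_chain_weights:
  assumes "prime p" "finite U" "U \<subseteq> range (\<lambda>d. p ^ d)" "sorted_wrt (>) ts" "\<forall>t\<in>set ts. t < \<Sum>U"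
  shows "[int (alphaB (\<Sum>U) ts) = (\<Sum>Us\<in>sum_chains U (rev ts). chain_weight U Us)] (mod int p)"
  using assms(2-)
proof (induction ts arbitrary: U)
  case Nil
  have "sum_chains U [] = {[]}" unfolding sum_chains_def by auto
  then show ?case by (simp add: chain_weight_def)
next
  case (Cons t ts)
  let ?I = "{V. V \<subseteq> U \<and> \<Sum>V = t}"
  have "0 \<notin> U" using Cons.prems(2) prime_gt_0_nat[OF assms(1)] by auto
  have "t < \<Sum>U" using Cons.prems by simp
  have inner: "[(\<Sum>Us\<in>sum_chains V (rev ts). chain_weight U (Us @ [V])) = 2 ^ (\<Sum>U - t) * int (alphaB t ts)] (mod int p)"
    if V: "V \<in> ?I" for V
  proof -
    have "(\<Sum>Us\<in>sum_chains V (rev ts). chain_weight U (Us @ [V])) =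
        2 ^ (card U - card V) * (\<Sum>Us\<in>sum_chains V (rev ts). chain_weight V Us)"
      using V Cons.prems(1) by (simp add: sum_chain_weights_snoc)
    also have "[\<dots> = 2 ^ (\<Sum>U - t) * int (alphaB t ts)] (mod int p)"
    proof (rule cong_mult)
      show "[2 ^ (card U - card V) = (2::int) ^ (\<Sum>U - t)] (mod int p)"
        using two_pow_card_diff_cong[OF assms(1) Cons.prems(1,2)] V by auto
      have "finite V" using V Cons.prems(1) finite_subset by blast
      then show "[(\<Sum>Us\<in>sum_chains V (rev ts). chain_weight V Us) = int (alphaB t ts)] (mod int p)"
        using Cons.IH[of V] V Cons.prems by (auto intro: cong_sym)
    qed
    finally show ?thesis .
  qed
  have "(\<Sum>Us\<in>sum_chains U (rev (t # ts)). chain_weight U Us) =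
      (\<Sum>V\<in>?I. \<Sum>Us\<in>sum_chains V (rev ts). chain_weight U (Us @ [V]))"
    unfolding rev.simps by (rule sum_sum_chains_snoc[OF Cons.prems(1) \<open>0 \<notin> U\<close> \<open>t < \<Sum>U\<close>])
  also have "[\<dots> = (\<Sum>V\<in>?I. 2 ^ (\<Sum>U - t) * int (alphaB t ts))] (mod int p)"
    by (rule cong_sum) (rule inner)
  also have "(\<Sum>V\<in>?I. 2 ^ (\<Sum>U - t) * int (alphaB t ts)) = int (card ?I) * 2 ^ (\<Sum>U - t) * int (alphaB t ts)"
    by simp
  also have "[\<dots> = int (\<Sum>U choose t) * 2 ^ (\<Sum>U - t) * int (alphaB t ts)] (mod int p)"
  proof -
    have "[int (card ?I) = int (\<Sum>U choose t)] (mod int p)"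
      using choose_sum_prime_powers_cong[OF assms(1) Cons.prems(1,2), of t] by (simp add: cong_int_iff cong_sym)
    then show ?thesis by (rule cong_mult[OF cong_mult[OF _ cong_refl] cong_refl])
  qed
  also have "int (\<Sum>U choose t) * 2 ^ (\<Sum>U - t) * int (alphaB t ts) = int (alphaB (\<Sum>U) (t # ts))"
    by simp
  finally show ?case by (rule cong_sym)
qed

lemma card_descents_subset_cong:
  assumes "prime p" "finite E" "E \<subseteq> range (\<lambda>d. p ^ d)" "T \<subseteq> {..<\<Sum>E}"
  shows "[int (card {xs \<in> signed_words {1..int (\<Sum>E)}. word_descents xs \<subseteq> T}) =
    (\<Sum>Us\<in>sum_chains E (sorted_list_of_set T). chain_weight E Us)] (mod int p)"
proof -
  define n where "n = \<Sum>E"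
  have "finite T" using assms(4) finite_subset by blast
  let ?ts = "rev (sorted_list_of_set T)"
  have "sorted_wrt (>) ?ts" "set ?ts = T" using \<open>finite T\<close> by (simp_all add: sorted_wrt_rev)
  moreover have "card {xs \<in> signed_words {1..int n}. word_descents xs \<subseteq> set ?ts} = alphaB (card {1..int n}) ?ts"
  proof (rule card_signed_words_descents_subset)
    have "T \<subseteq> {..<n}" using assms(4) unfolding n_def .
    then show "\<forall>t\<in>set ?ts. t < card {1..int n}" using \<open>set ?ts = T\<close> by auto
  qed (use \<open>sorted_wrt (>) ?ts\<close> in auto)
  ultimately have "card {xs \<in> signed_words {1..int n}. word_descents xs \<subseteq> T} = alphaB n ?ts"
    by simp
  moreover have "[int (alphaB n ?ts) = (\<Sum>Us\<in>sum_chains E (rev ?ts). chain_weight E Us)] (mod int p)"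
    using \<open>sorted_wrt (>) ?ts\<close> \<open>set ?ts = T\<close> assms unfolding n_def
    by (intro alphaB_cong_chain_weights) auto
  ultimately show ?thesis by (simp add: n_def[symmetric])
qed

lemma chainsB_eq_UN_sum_chains:
  assumes "finite E" "0 \<notin> E" "finite S"
  shows "chainsB E S = (\<Union>T\<in>Pow S. sum_chains E (sorted_list_of_set T))"
proof (intro Set.set_eqI iffI)
  fix Us assume "Us \<in> chainsB E S"
  then have Us: "sorted_wrt (\<subset>) Us" "\<forall>U\<in>set Us. U \<subset> E \<and> \<Sum>U \<in> S" unfolding chainsB_def by auto
  have "\<Sum>U < \<Sum>V" if "U \<in> set Us" "V \<in> set Us" "U \<subset> V" for U V
  proof -
    have "V \<subset> E" using that(2) Us(2) by blast
    then show ?thesis using that(3) assms(1,2) finite_subset by (intro Sum_psubset_less) auto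
  qed
  then have "sorted_wrt (<) (map Sum Us)"
    unfolding sorted_wrt_map by (rule sorted_wrt_mono_rel[OF _ Us(1)])
  then have "sorted_list_of_set (set (map Sum Us)) = map Sum Us"
    by (intro strict_sorted_equal) auto
  then have "Us \<in> sum_chains E (sorted_list_of_set (set (map Sum Us)))"
    using Us unfolding sum_chains_def by (simp add: sorted_wrt_append)
  moreover have "set (map Sum Us) \<in> Pow S" using Us(2) by auto
  ultimately show "Us \<in> (\<Union>T\<in>Pow S. sum_chains E (sorted_list_of_set T))" by blast
next
  fix Us assume "Us \<in> (\<Union>T\<in>Pow S. sum_chains E (sorted_list_of_set T))"
  then obtain T where "T \<subseteq> S" "sorted_wrt (\<subset>) (Us @ [E])" "map Sum Us = sorted_list_of_set T"
    unfolding sum_chains_def by auto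
  moreover have "finite T" using \<open>T \<subseteq> S\<close> assms(3) finite_subset by blast
  then have "set (sorted_list_of_set T) = T" by simp
  ultimately have "Sum ` set Us \<subseteq> S" by (metis list.set_map)
  then show "Us \<in> chainsB E S"
    using \<open>sorted_wrt (\<subset>) (Us @ [E])\<close> unfolding chainsB_def by (auto simp: sorted_wrt_append)
qed

lemma chiB_eq_sum_chain_weights:
  assumes "finite E" "0 \<notin> E" "finite S"
  shows "chiB E S = (\<Sum>T\<in>Pow S. (-1) ^ card T * (\<Sum>Us\<in>sum_chains E (sorted_list_of_set T). chain_weight E Us))"
proof -
  have disjoint: "sum_chains E (sorted_list_of_set T) \<inter> sum_chains E (sorted_list_of_set T') = {}"
    if "T \<in> Pow S" "T' \<in> Pow S" "T \<noteq> T'" for T T'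
  proof -
    have "finite T" "finite T'" using that(1,2) assms(3) finite_subset by auto
    then have "sorted_list_of_set T \<noteq> sorted_list_of_set T'"
      using that(3) by (metis sorted_list_of_set.set_sorted_key_list_of_set)
    then show ?thesis unfolding sum_chains_def by auto
  qed
  have length: "length Us = card T" if "T \<in> Pow S" "Us \<in> sum_chains E (sorted_list_of_set T)" for T Us
    using that unfolding sum_chains_def by (metis (mono_tags, lifting) length_map length_sorted_list_of_set mem_Collect_eq)
  have "chiB E S = (\<Sum>T\<in>Pow S. \<Sum>Us\<in>sum_chains E (sorted_list_of_set T). (-1) ^ length Us * chain_weight E Us)"
    unfolding chiB_def chain_weight_def chainsB_eq_UN_sum_chains[OF assms]
    using assms(1,3) disjoint by (intro sum.UNION_disjoint) (auto intro: finite_sum_chains)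
  also have "\<dots> = (\<Sum>T\<in>Pow S. (-1) ^ card T * (\<Sum>Us\<in>sum_chains E (sorted_list_of_set T). chain_weight E Us))"
    using length by (simp add: sum_distrib_left)
  finally show ?thesis .
qed

lemma card_signed_perms_descents_cong:
  assumes "prime p" "finite E" "E \<subseteq> range (\<lambda>d. p ^ d)" "S \<subseteq> {..<\<Sum>E}"
  shows "[int (card {w \<in> signed_perms (\<Sum>E). descents_B (\<Sum>E) w = S}) = (-1) ^ card S * chiB E S] (mod int p)"
proof -
  define W where "W = signed_words {1..int (\<Sum>E)}"
  define weights where "weights T = (\<Sum>Us\<in>sum_chains E (sorted_list_of_set T). chain_weight E Us)" for T
  have "finite S" using assms(4) finite_subset by blast
  have "0 \<notin> E" using assms(3) prime_gt_0_nat[OF assms(1)] by auto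
  have "int (card {xs \<in> W. word_descents xs \<subseteq> T}) = (\<Sum>R\<in>Pow T. int (card {xs \<in> W. word_descents xs = R}))"
    if "finite T" for T
  proof -
    have "{xs \<in> W. word_descents xs \<subseteq> T} = (\<Union>R\<in>Pow T. {xs \<in> W. word_descents xs = R})" by auto
    moreover have "card (\<Union>R\<in>Pow T. {xs \<in> W. word_descents xs = R}) =
        (\<Sum>R\<in>Pow T. card {xs \<in> W. word_descents xs = R})"
      using that finite_signed_words[of "{1..int (\<Sum>E)}"] unfolding W_def
      by (intro card_UN_disjoint) auto
    ultimately show ?thesis by simp
  qed
  then have "int (card {xs \<in> W. word_descents xs = S}) =
      (\<Sum>T\<in>Pow S. (-1) ^ (card S - card T) * int (card {xs \<in> W. word_descents xs \<subseteq> T}))"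
    using \<open>finite S\<close> by (intro inclusion_exclusion_mobius) auto
  also have "\<dots> = (-1) ^ card S * (\<Sum>T\<in>Pow S. (-1) ^ card T * int (card {xs \<in> W. word_descents xs \<subseteq> T}))"
    using \<open>finite S\<close> by (auto simp: sum_distrib_left card_mono finite_subset power_add
        simp flip: neg_one_power_add_eq_neg_one_power_diff intro!: sum.cong)
  also have "[\<dots> = (-1) ^ card S * (\<Sum>T\<in>Pow S. (-1) ^ card T * weights T)] (mod int p)"
    using assms(4) unfolding W_def weights_def
    by (intro cong_mult cong_refl cong_sum card_descents_subset_cong[OF assms(1-3)]) auto
  also have "(-1) ^ card S * (\<Sum>T\<in>Pow S. (-1) ^ card T * weights T) = (-1) ^ card S * chiB E S"
    unfolding weights_def using chiB_eq_sum_chain_weights[OF assms(2) \<open>0 \<notin> E\<close> \<open>finite S\<close>] by simp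
  finally show ?thesis unfolding W_def card_signed_perms_with_descents .
qed

section \<open>Pseudo-compositions and descent sets\<close>

lemma comp_descents_singleton: "comp_descents [a] = {}"
  unfolding comp_descents_def by auto

lemma comp_descents_Cons:
  assumes "\<beta> \<noteq> []"
  shows "comp_descents (a # \<beta>) = insert a ((+) a ` comp_descents \<beta>)"
proof (intro Set.set_eqI iffI)
  fix x assume "x \<in> comp_descents (a # \<beta>)"
  then obtain j where j: "1 \<le> j" "j < length (a # \<beta>)" "x = sum_list (take j (a # \<beta>))"
    unfolding comp_descents_def by auto
  obtain i where i: "j = Suc i" using j(1) by (cases j) auto
  show "x \<in> insert a ((+) a ` comp_descents \<beta>)"
  proof (cases "i = 0")
    case True
    then show ?thesis using j i by simp
  next
    case False
    then have "sum_list (take i \<beta>) \<in> comp_descents \<beta>" using j i unfolding comp_descents_def by auto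
    then show ?thesis using j i by auto
  qed
next
  fix x assume "x \<in> insert a ((+) a ` comp_descents \<beta>)"
  then show "x \<in> comp_descents (a # \<beta>)"
  proof
    assume "x = a"
    moreover have "sum_list (take 1 (a # \<beta>)) = a" by simp
    moreover have "1 < length (a # \<beta>)" using assms by simp
    ultimately show ?thesis unfolding comp_descents_def by force
  next
    assume "x \<in> (+) a ` comp_descents \<beta>"
    then obtain j where j: "1 \<le> j" "j < length \<beta>" "x = a + sum_list (take j \<beta>)"
      unfolding comp_descents_def by auto
    then have "x = sum_list (take (Suc j) (a # \<beta>))" "1 \<le> Suc j" "Suc j < length (a # \<beta>)" by auto
    then show ?thesis unfolding comp_descents_def by blast
  qed
qed

lemma comp_descents_pos:
  assumes "\<forall>x\<in>set \<beta>. 0 < x" "x \<in> comp_descents \<beta>"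
  shows "0 < x"
proof -
  obtain j where j: "1 \<le> j" "j < length \<beta>" "x = sum_list (take j \<beta>)"
    using assms(2) unfolding comp_descents_def by auto
  have "\<beta> ! 0 \<in> set (take j \<beta>)" using j by (simp add: in_set_conv_nth) (rule exI[where x = 0], auto)
  moreover have "\<beta> ! 0 \<in> set \<beta>" using j by (intro nth_mem) auto
  then have "0 < \<beta> ! 0" using assms(1) by blast
  ultimately show ?thesis using member_le_sum_list[of "\<beta> ! 0" "take j \<beta>"] j(3) by linarith
qed

lemma comp_descents_subset:
  assumes "pseudo_comp n \<alpha>"
  shows "comp_descents \<alpha> \<subseteq> {..<n}"
proof
  fix x assume "x \<in> comp_descents \<alpha>"
  then obtain j where j: "1 \<le> j" "j < length \<alpha>" "x = sum_list (take j \<alpha>)"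
    unfolding comp_descents_def by auto
  have "\<alpha> ! j \<in> set (tl \<alpha>)" using j by (cases \<alpha>) (auto simp: nth_Cons split: nat.split)
  then have "0 < \<alpha> ! j" using assms unfolding pseudo_comp_def by auto
  moreover have "\<alpha> ! j \<le> sum_list (drop j \<alpha>)"
    using j by (intro member_le_sum_list) (simp add: in_set_conv_nth, rule exI[where x = 0], auto)
  moreover have "sum_list (take j \<alpha>) + sum_list (drop j \<alpha>) = n"
    using assms unfolding pseudo_comp_def by (metis sum_list_append append_take_drop_id)
  ultimately show "x \<in> {..<n}" using j by simp
qed

lemma pseudo_comp_Cons_iff: "pseudo_comp n (a # \<beta>) \<longleftrightarrow> (\<forall>x\<in>set \<beta>. 0 < x) \<and> a + sum_list \<beta> = n"
  unfolding pseudo_comp_def by auto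

lemma comp_descents_inj:
  "pseudo_comp n \<alpha> \<Longrightarrow> pseudo_comp n \<alpha>' \<Longrightarrow> comp_descents \<alpha> = comp_descents \<alpha>' \<Longrightarrow> \<alpha> = \<alpha>'"
proof (induction \<alpha> arbitrary: n \<alpha>')
  case (Cons a \<beta>)
  obtain a' \<beta>' where \<alpha>': "\<alpha>' = a' # \<beta>'" using Cons.prems(2) unfolding pseudo_comp_def by (cases \<alpha>') auto
  have parts: "\<forall>x\<in>set \<beta>. 0 < x" "a + sum_list \<beta> = n" "\<forall>x\<in>set \<beta>'. 0 < x" "a' + sum_list \<beta>' = n"
    using Cons.prems(1,2) pseudo_comp_Cons_iff \<alpha>' by auto
  show ?case
  proof (cases "\<beta> = []")
    case True
    then have "comp_descents \<alpha>' = {}" using Cons.prems(3) comp_descents_singleton by simp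
    then have "\<beta>' = []" using \<alpha>' comp_descents_Cons by fastforce
    then show ?thesis using True \<alpha>' parts by simp
  next
    case False
    then have "\<beta>' \<noteq> []" using Cons.prems(3) comp_descents_Cons[OF False] \<alpha>' comp_descents_singleton by force
    note descents = comp_descents_Cons[OF False, of a] comp_descents_Cons[OF this, of a']
    have "\<forall>x\<in>comp_descents (a # \<beta>). a \<le> x" "\<forall>x\<in>comp_descents (a' # \<beta>'). a' \<le> x"
      using descents by auto
    then have "a = a'" using descents Cons.prems(3) \<alpha>' by (metis insertI1 order_antisym)
    have above: "\<forall>x\<in>(+) a ` comp_descents \<beta>. a < x" "\<forall>x\<in>(+) a ` comp_descents \<beta>'. a < x"
      using comp_descents_pos parts(1,3) by auto
    have "(+) a ` comp_descents \<beta> = comp_descents (a # \<beta>) - {a}" using descents(1) above(1) by auto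
    also have "\<dots> = (+) a ` comp_descents \<beta>'" using Cons.prems(3) \<alpha>' \<open>a = a'\<close> descents(2) above(2) by auto
    finally have "comp_descents \<beta> = comp_descents \<beta>'" by (simp add: inj_image_eq_iff)
    moreover have "pseudo_comp (n - a) \<beta>" "pseudo_comp (n - a) \<beta>'"
      using False \<open>\<beta>' \<noteq> []\<close> parts \<open>a = a'\<close> unfolding pseudo_comp_def by (auto dest: list.set_sel(2))
    ultimately show ?thesis using Cons.IH \<alpha>' \<open>a = a'\<close> by blast
  qed
qed (simp add: pseudo_comp_def)

lemma pseudo_comp_parts_pos:
  assumes "pseudo_comp m \<beta>" "0 \<notin> comp_descents \<beta>" "0 < m"
  shows "\<forall>x\<in>set \<beta>. 0 < x"
proof -
  obtain b \<gamma> where \<beta>: "\<beta> = b # \<gamma>" using assms(1) unfolding pseudo_comp_def by (cases \<beta>) auto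
  have "0 < b"
  proof (cases "\<gamma> = []")
    case False
    then show ?thesis using assms(2) comp_descents_Cons[OF False, of b] \<beta> by auto
  qed (use assms(1,3) \<beta> in \<open>simp add: pseudo_comp_def\<close>)
  then show ?thesis using assms(1) \<beta> unfolding pseudo_comp_def by auto
qed

lemma comp_descents_surj:
  "S \<subseteq> {..<n} \<Longrightarrow> \<exists>\<alpha>. pseudo_comp n \<alpha> \<and> comp_descents \<alpha> = S"
proof (induction "card S" arbitrary: S n rule: less_induct)
  case less
  show ?case
  proof (cases "S = {}")
    case True
    have "pseudo_comp n [n]" unfolding pseudo_comp_def by simp
    then show ?thesis using True comp_descents_singleton by blast
  next
    case False
    have "finite S" using less.prems finite_subset by blast
    define a where "a = Min S"
    have a: "a \<in> S" "\<forall>x\<in>S. a \<le> x" using \<open>finite S\<close> False unfolding a_def by auto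
    then have "a < n" using less.prems by auto
    define S' where "S' = (\<lambda>x. x - a) ` (S - {a})"
    have "inj_on (\<lambda>x. x - a) (S - {a})" using a by (auto simp: inj_on_def)
    then have "card S' < card S" unfolding S'_def by (simp add: card_image card_Diff1_less[OF \<open>finite S\<close> a(1)])
    moreover have "S' \<subseteq> {..<n - a}" unfolding S'_def using a less.prems by (auto simp: diff_less_mono)
    ultimately obtain \<beta> where \<beta>: "pseudo_comp (n - a) \<beta>" "comp_descents \<beta> = S'" using less.hyps by blast
    have "0 \<notin> S'" unfolding S'_def using a by force
    then have "\<forall>x\<in>set \<beta>. 0 < x" using pseudo_comp_parts_pos \<beta> \<open>a < n\<close> by auto
    then have "pseudo_comp n (a # \<beta>)" using \<beta>(1) \<open>a < n\<close> unfolding pseudo_comp_def by auto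
    moreover have "(+) a ` S' = S - {a}" unfolding S'_def image_image using a by (auto simp: image_iff)
    then have "comp_descents (a # \<beta>) = S"
      using comp_descents_Cons[of \<beta> a] \<beta> a(1) by (cases "\<beta> = []") (auto simp: pseudo_comp_def)
    ultimately show ?thesis by blast
  qed
qed

lemma bij_betw_comp_descents: "bij_betw comp_descents {\<alpha>. pseudo_comp n \<alpha>} (Pow {..<n})"
  unfolding bij_betw_def
proof
  show "inj_on comp_descents {\<alpha>. pseudo_comp n \<alpha>}" using comp_descents_inj by (auto simp: inj_on_def)
  show "comp_descents ` {\<alpha>. pseudo_comp n \<alpha>} = Pow {..<n}"
  proof (intro Set.set_eqI iffI)
    fix S assume "S \<in> Pow {..<n}"
    then obtain \<alpha> where "pseudo_comp n \<alpha>" "comp_descents \<alpha> = S" using comp_descents_surj by blast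
    then show "S \<in> comp_descents ` {\<alpha>. pseudo_comp n \<alpha>}" by blast
  qed (use comp_descents_subset in auto)
qed

lemma card_pseudo_comps_descents:
  "card {\<alpha>. pseudo_comp n \<alpha> \<and> Q (comp_descents \<alpha>)} = card {S \<in> Pow {..<n}. Q S}"
proof (rule bij_betw_same_card, rule bij_betw_subset[OF bij_betw_comp_descents])
  show "comp_descents ` {\<alpha>. pseudo_comp n \<alpha> \<and> Q (comp_descents \<alpha>)} = {S \<in> Pow {..<n}. Q S}"
  proof (intro Set.set_eqI iffI)
    fix S assume S: "S \<in> {S \<in> Pow {..<n}. Q S}"
    then obtain \<alpha> where "pseudo_comp n \<alpha>" "comp_descents \<alpha> = S" using comp_descents_surj by blast
    then show "S \<in> comp_descents ` {\<alpha>. pseudo_comp n \<alpha> \<and> Q (comp_descents \<alpha>)}" using S by blast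
  qed (use comp_descents_subset in auto)
qed auto

lemma cB_eq_card_chiB_cong:
  assumes "prime p" "finite E" "E \<subseteq> range (\<lambda>d. p ^ d)"
  shows "cB p i (\<Sum>E) = card {S. S \<subseteq> {..<\<Sum>E} \<and> [(-1) ^ card S * chiB E S = i] (mod int p)}"
proof -
  have "cB p i (\<Sum>E) =
      card {S \<in> Pow {..<\<Sum>E}. [int (card {w \<in> signed_perms (\<Sum>E). descents_B (\<Sum>E) w = S}) = i] (mod int p)}"
    unfolding cB_def ribbonB_def by (rule card_pseudo_comps_descents)
  also have "\<dots> = card {S. S \<subseteq> {..<\<Sum>E} \<and> [(-1) ^ card S * chiB E S = i] (mod int p)}"
  proof (intro arg_cong[where f = card] Collect_cong)
    fix S
    show "S \<in> Pow {..<\<Sum>E} \<and> [int (card {w \<in> signed_perms (\<Sum>E). descents_B (\<Sum>E) w = S}) = i] (mod int p) \<longleftrightarrow>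
        S \<subseteq> {..<\<Sum>E} \<and> [(-1) ^ card S * chiB E S = i] (mod int p)"
    proof (cases "S \<subseteq> {..<\<Sum>E}")
      case True
      then have "[int (card {w \<in> signed_perms (\<Sum>E). descents_B (\<Sum>E) w = S}) = (-1) ^ card S * chiB E S] (mod int p)"
        by (rule card_signed_perms_descents_cong[OF assms])
      then show ?thesis using True by (meson PowI cong_sym cong_trans)
    qed simp
  qed
  finally show ?thesis .
qed

section \<open>Counting descent sets\<close>

lemma sum_Pow_union:
  assumes "finite P" "finite Q" "P \<inter> Q = {}"
  shows "(\<Sum>S\<in>Pow (P \<union> Q). f S) = (\<Sum>T\<in>Pow P. \<Sum>R\<in>Pow Q. f (T \<union> R))"
proof -
  have "(\<Sum>S\<in>Pow (P \<union> Q). f S) = (\<Sum>(T, R)\<in>Pow P \<times> Pow Q. f (T \<union> R))"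
    by (rule sum.reindex_bij_witness[where j = "\<lambda>S. (S \<inter> P, S \<inter> Q)" and i = "\<lambda>(T, R). T \<union> R"])
       (use assms(3) in \<open>auto simp: Int_Un_distrib[symmetric] Int_absorb2\<close>)
  also have "\<dots> = (\<Sum>T\<in>Pow P. \<Sum>R\<in>Pow Q. f (T \<union> R))" by (rule sum.cartesian_product[symmetric])
  finally show ?thesis .
qed

lemma sum_Pow_parity:
  fixes g :: "bool \<Rightarrow> 'a::comm_semiring_1"
  assumes "finite Q" "Q \<noteq> {}"
  shows "(\<Sum>R\<in>Pow Q. g (even (card R))) = 2 ^ (card Q - 1) * (g True + g False)"
proof -
  let ?even = "{R. R \<subseteq> Q \<and> even (card R)}" and ?odd = "{R. R \<subseteq> Q \<and> odd (card R)}"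
  have split: "Pow Q = ?even \<union> ?odd" "?even \<inter> ?odd = {}" by auto
  have "card ?even = card ?odd"
    using card_subsupersets_even_odd[of Q "{}"] assms by auto
  moreover have "card ?even + card ?odd = 2 * 2 ^ (card Q - 1)"
    using card_Un_disjoint[of ?even ?odd] split assms card_Pow[of Q]
    by (simp add: power_Suc[symmetric] card_gt_0_iff)
  ultimately have "card ?even = 2 ^ (card Q - 1)" "card ?odd = 2 ^ (card Q - 1)" by simp_all
  moreover have "(\<Sum>R\<in>Pow Q. g (even (card R))) = (\<Sum>R\<in>?even. g True) + (\<Sum>R\<in>?odd. g False)"
    unfolding split(1) using split(2) assms(1) by (subst sum.union_disjoint) auto
  ultimately show ?thesis by (simp add: distrib_left)
qed

lemma sum_Pow_sign_twisted:
  fixes f :: "'a set \<Rightarrow> int"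
  assumes "finite Q" "Q \<noteq> {}" "finite T" "T \<inter> Q = {}" "\<And>R. R \<subseteq> Q \<Longrightarrow> f (T \<union> R) = f T"
  shows "(\<Sum>R\<in>Pow Q. of_bool ([(-1) ^ card (T \<union> R) * f (T \<union> R) = i] (mod m)) :: nat) =
    2 ^ (card Q - 1) * (of_bool ([f T = i] (mod m)) + of_bool ([f T = - i] (mod m)))"
proof -
  define G where "G b = (of_bool ([(-1) ^ card T * (if b then 1 else -1) * f T = i] (mod m)) :: nat)" for b
  have "of_bool ([(-1) ^ card (T \<union> R) * f (T \<union> R) = i] (mod m)) = G (even (card R))" if "R \<subseteq> Q" for R
  proof -
    have "card (T \<union> R) = card T + card R"
      using that assms(1,3,4) finite_subset by (subst card_Un_disjoint) auto
    then show ?thesis unfolding G_def assms(5)[OF that] by (simp add: power_add minus_one_power_iff mult.assoc)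
  qed
  then have "(\<Sum>R\<in>Pow Q. of_bool ([(-1) ^ card (T \<union> R) * f (T \<union> R) = i] (mod m))) =
      (\<Sum>R\<in>Pow Q. G (even (card R)))" by (intro sum.cong) auto
  also have "\<dots> = 2 ^ (card Q - 1) * (G True + G False)" by (rule sum_Pow_parity[OF assms(1,2)])
  also have "G True + G False = of_bool ([f T = i] (mod m)) + of_bool ([f T = - i] (mod m))"
    unfolding G_def using cong_minus_minus_iff[of "f T" "- i" m]
    by (cases "even (card T)") (simp_all add: add.commute)
  finally show ?thesis .
qed

lemma card_sign_twisted_subsets:
  fixes f :: "'a set \<Rightarrow> int"
  assumes "finite P" "finite Q" "P \<inter> Q = {}" "Q \<noteq> {}" "\<And>S. f S = f (S \<inter> P)"
  shows "card {S. S \<subseteq> P \<union> Q \<and> [(-1) ^ card S * f S = i] (mod m)} =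
    2 ^ (card Q - 1) * (card {T. T \<subseteq> P \<and> [f T = i] (mod m)} + card {T. T \<subseteq> P \<and> [f T = - i] (mod m)})"
proof -
  have card_as_sum: "card {T. T \<subseteq> A \<and> \<phi> T} = (\<Sum>T\<in>Pow A. of_bool (\<phi> T))" if "finite A"
    for A :: "'a set" and \<phi>
    using that by (simp add: Int_def Pow_def)
  have "card {S. S \<subseteq> P \<union> Q \<and> [(-1) ^ card S * f S = i] (mod m)} =
      (\<Sum>T\<in>Pow P. \<Sum>R\<in>Pow Q. of_bool ([(-1) ^ card (T \<union> R) * f (T \<union> R) = i] (mod m)))"
    using assms(1,2) by (simp only: card_as_sum finite_Un sum_Pow_union[OF assms(1-3)])
  also have "\<dots> = (\<Sum>T\<in>Pow P. 2 ^ (card Q - 1) *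
      (of_bool ([f T = i] (mod m)) + of_bool ([f T = - i] (mod m))))"
  proof (intro sum.cong refl sum_Pow_sign_twisted assms(2,4))
    fix T R assume "T \<in> Pow P" "R \<subseteq> Q"
    then have "(T \<union> R) \<inter> P = T \<inter> P" using assms(3) by auto
    then show "f (T \<union> R) = f T" using assms(5)[of "T \<union> R"] assms(5)[of T] by simp
  qed (use assms(1,3) finite_subset in auto)
  also have "\<dots> = 2 ^ (card Q - 1) * (card {T. T \<subseteq> P \<and> [f T = i] (mod m)} + card {T. T \<subseteq> P \<and> [f T = - i] (mod m)})"
    by (simp only: card_as_sum[OF assms(1)] sum.distrib flip: sum_distrib_left)
  finally show ?thesis .
qed

lemma card_cong_add_card_cong_neg:
  fixes f :: "'a \<Rightarrow> int"
  assumes "prime p" "odd p" "finite (Collect A)"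
  shows "card {x. A x \<and> [f x = i] (mod int p)} + card {x. A x \<and> [f x = - i] (mod int p)} =
    (if [i = 0] (mod int p) then 2 * card {x. A x \<and> [f x = i] (mod int p)}
     else card {x. A x \<and> ([f x = i] (mod int p) \<or> [f x = - i] (mod int p))})"
proof (cases "[i = 0] (mod int p)")
  case True
  then have "[- i = i] (mod int p)" by (metis cong_minus_minus_iff cong_sym cong_trans minus_zero)
  then have "[c = - i] (mod int p) \<longleftrightarrow> [c = i] (mod int p)" for c by (meson cong_sym cong_trans)
  then show ?thesis using True by simp
next
  case False
  have "\<not> [c = - i] (mod int p)" if "[c = i] (mod int p)" for c
  proof
    assume "[c = - i] (mod int p)"
    with cong_sym[OF that] have "[i = - i] (mod int p)" by (rule cong_trans)
    then have "int p dvd i - - i" by (simp only: cong_iff_dvd_diff)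
    then have "int p dvd 2 * i" by (metis diff_minus_eq_add mult_2)
    moreover have "3 \<le> p" using prime_ge_2_nat[OF assms(1)] assms(2) by presburger
    then have "\<not> int p dvd 2" by (auto dest: zdvd_imp_le)
    moreover have "prime (int p)" using assms(1) by simp
    ultimately have "int p dvd i" by (simp add: prime_dvd_mult_iff)
    then show False using False by (simp add: cong_0_iff)
  qed
  then have "{x. A x \<and> ([f x = i] (mod int p) \<or> [f x = - i] (mod int p))} =
      {x. A x \<and> [f x = i] (mod int p)} \<union> {x. A x \<and> [f x = - i] (mod int p)}"
    "{x. A x \<and> [f x = i] (mod int p)} \<inter> {x. A x \<and> [f x = - i] (mod int p)} = {}"
    by auto
  then show ?thesis using False assms(3) by (simp add: card_Un_disjoint)
qed

lemma chiB_Int_proper_subset_sums: "chiB E S = chiB E (S \<inter> Sum ` {U. U \<subset> E})"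
proof -
  have "chainsB E S = chainsB E (S \<inter> Sum ` {U. U \<subset> E})" unfolding chainsB_def by auto
  then show ?thesis unfolding chiB_def by simp
qed

lemma cB_sum_prime_powers:
  fixes p :: nat and E :: "nat set"
  assumes "prime p" "odd p" "finite E" "E \<subseteq> range (\<lambda>d. p ^ d)" "\<not> {..<\<Sum>E} \<subseteq> Sum ` {U. U \<subset> E}"
  defines "P \<equiv> Sum ` {U. U \<subset> E}" and "n \<equiv> \<Sum>E" and "k \<equiv> card E"
  shows "cB p i n =
    (if [i = 0] (mod int p)
     then 2 ^ (n + 1 - 2 ^ k) * card {T. T \<subseteq> P \<and> [chiB E T = i] (mod int p)}
     else 2 ^ (n - 2 ^ k) * card {T. T \<subseteq> P \<and> ([chiB E T = i] (mod int p) \<or> [chiB E T = - i] (mod int p))})"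
proof -
  define Q where "Q = {..<n} - P"
  have "0 \<notin> E" using assms(4) prime_gt_0_nat[OF assms(1)] by auto
  then have "P \<subseteq> {..<n}" unfolding P_def n_def by (rule proper_subset_sums_less[OF assms(3)])
  then have "finite P" "finite Q" "P \<inter> Q = {}" "P \<union> Q = {..<n}"
    using finite_subset unfolding Q_def by auto
  have "Q \<noteq> {}" using assms(5) unfolding Q_def P_def n_def by blast
  have "card P = 2 ^ k - 1"
    unfolding P_def k_def by (rule card_proper_subset_sums[OF prime_ge_2_nat[OF assms(1)] assms(3,4)])
  moreover have "card Q = n - card P"
    unfolding Q_def using \<open>P \<subseteq> {..<n}\<close> \<open>finite P\<close> by (simp add: card_Diff_subset)
  moreover have "0 < card Q" using \<open>finite Q\<close> \<open>Q \<noteq> {}\<close> by (simp add: card_gt_0_iff)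
  moreover have "0 < (2::nat) ^ k" by simp
  ultimately have card_Q: "card Q = n + 1 - 2 ^ k" "card Q - 1 = n - 2 ^ k" by linarith+
  have pow_card_Q: "2 ^ (card Q - 1) * (2 * c) = 2 ^ card Q * (c :: nat)" for c
    using \<open>0 < card Q\<close> by (cases "card Q") (simp_all add: ac_simps)
  have "cB p i n = card {S. S \<subseteq> P \<union> Q \<and> [(-1) ^ card S * chiB E S = i] (mod int p)}"
    using cB_eq_card_chiB_cong[OF assms(1,3,4)] unfolding \<open>P \<union> Q = {..<n}\<close> n_def .
  also have "\<dots> = 2 ^ (card Q - 1) *
      (card {T. T \<subseteq> P \<and> [chiB E T = i] (mod int p)} + card {T. T \<subseteq> P \<and> [chiB E T = - i] (mod int p)})"
    using \<open>finite P\<close> \<open>finite Q\<close> \<open>P \<inter> Q = {}\<close> \<open>Q \<noteq> {}\<close>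
    by (rule card_sign_twisted_subsets) (simp add: P_def chiB_Int_proper_subset_sums[symmetric])
  also have "card {T. T \<subseteq> P \<and> [chiB E T = i] (mod int p)} + card {T. T \<subseteq> P \<and> [chiB E T = - i] (mod int p)} =
    (if [i = 0] (mod int p) then 2 * card {T. T \<subseteq> P \<and> [chiB E T = i] (mod int p)}
     else card {T. T \<subseteq> P \<and> ([chiB E T = i] (mod int p) \<or> [chiB E T = - i] (mod int p))})"
    using \<open>finite P\<close> by (intro card_cong_add_card_cong_neg[OF assms(1,2)]) simp
  finally show ?thesis using pow_card_Q card_Q by simp
qed

theorem corollary4p7:
  fixes p :: nat and D :: "nat set" and i :: int
  assumes "prime p" and "odd p" and "finite D" and "card D > 1"
  defines "n \<equiv> \<Sum>d\<in>D. p ^ d"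
      and "k \<equiv> card D"
      and "E \<equiv> (\<lambda>d. p ^ d) ` D"
  defines "P \<equiv> {\<Sum>U | U. U \<subset> E}"
  shows "cB p i n =
    (if [i = 0] (mod int p)
     then 2 ^ (n + 1 - 2 ^ k) * card {T. T \<subseteq> P \<and> [chiB E T = i] (mod int p)}
     else 2 ^ (n - 2 ^ k) * card {T. T \<subseteq> P \<and> ([chiB E T = i] (mod int p) \<or> [chiB E T = - i] (mod int p))})"
proof -
  have inj: "inj_on (\<lambda>d. p ^ d) D" using prime_ge_2_nat[OF assms(1)] by (simp add: inj_on_def)
  have "n = \<Sum>E" unfolding n_def E_def by (simp add: sum.reindex[OF inj])
  moreover have "k = card E" unfolding k_def E_def by (simp add: card_image[OF inj])
  moreover have "P = Sum ` {U. U \<subset> E}" unfolding P_def by auto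
  moreover have "finite E" "E \<subseteq> range (\<lambda>d. p ^ d)" unfolding E_def using assms(3) by auto
  moreover have "\<not> {..<\<Sum>E} \<subseteq> Sum ` {U. U \<subset> E}"
    unfolding E_def by (rule pred_prime_power_not_proper_subset_sum[OF assms(1-4)])
  ultimately show ?thesis using cB_sum_prime_powers[OF assms(1,2)] by simp
qed

end
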